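(* Let $\Gamma$ be a group and $\sigma\in\mathrm{Aut}(\Gamma)$ such that $\Gamma\rtimes_\sigma\mathbb Z$ is finitely generated, and let $G$ be a finite group. Then (i) $\mathrm{Hom}_\sigma(\Gamma,G)$ is finite, and (ii) $\frac{1}{|G|}\#\mathrm{Hom}(\Gamma\rtimes_\sigma\mathbb Z,G)=\#\big(\mathrm{Hom}_\sigma(\Gamma,G)/G\big)$; in particular $|G|$ divides $\#\mathrm{Hom}(\Gamma\rtimes_\sigma\mathbb Z,G)$.
   Context: $G$ acts on $\mathrm{Hom}(\Gamma,G)$ by conjugation, $(h\cdot\phi)(\gamma)=h\phi(\gamma)h^{-1}$. For $\sigma\in\mathrm{Aut}(\Gamma)$ set $\phi^\sigma(\gamma)=\phi(\sigma^{-1}\gamma)$, and let $\mathrm{Hom}_\sigma(\Gamma,G)$ be the set of $\phi\in\mathrm{Hom}(\Gamma,G)$ with $\phi^\sigma$ conjugate to $\phi$ by an element of $G$; it is stable under the $G$-action and $\mathrm{Hom}_\sigma(\Gamma,G)/G$ denotes its set of orbits. $\Gamma\rtimes_\sigma\mathbb Z$ is the semidirect product where the generator $1\in\mathbb Z$ acts on $\Gamma$ by $\sigma$. *)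

theory Defs
  imports "HOL-Algebra.Algebra"
begin

definition aut_zpow :: "('a, 'b) monoid_scheme \<Rightarrow> ('a \<Rightarrow> 'a) \<Rightarrow> int \<Rightarrow> 'a \<Rightarrow> 'a" where
  "aut_zpow \<Gamma> \<sigma> m = (if 0 \<le> m then \<sigma> ^^ nat m else (inv_into (carrier \<Gamma>) \<sigma>) ^^ nat (- m))"

definition semidirect_Z :: "('a, 'b) monoid_scheme \<Rightarrow> ('a \<Rightarrow> 'a) \<Rightarrow> ('a \<times> int) monoid" where
  "semidirect_Z \<Gamma> \<sigma> =
     \<lparr> carrier = carrier \<Gamma> \<times> (UNIV :: int set),
       monoid.mult = (\<lambda>(g, m) (h, n). (g \<otimes>\<^bsub>\<Gamma>\<^esub> aut_zpow \<Gamma> \<sigma> m h, m + n)),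
       monoid.one = (\<one>\<^bsub>\<Gamma>\<^esub>, 0) \<rparr>"

definition finitely_generated :: "('a, 'b) monoid_scheme \<Rightarrow> bool" where
  "finitely_generated H \<longleftrightarrow> (\<exists>S. finite S \<and> S \<subseteq> carrier H \<and> generate H S = carrier H)"

text \<open>Hom(\<Gamma>,G): homomorphisms, taken extensional (undefined off the carrier) so that
  they are genuine set-theoretic maps carrier \<Gamma> \<rightarrow> carrier G.\<close>
definition Hom :: "('a, 'b) monoid_scheme \<Rightarrow> ('c, 'd) monoid_scheme \<Rightarrow> ('a \<Rightarrow> 'c) set" where
  "Hom \<Gamma> G = hom \<Gamma> G \<inter> extensional (carrier \<Gamma>)"

definition conj_act :: "('a, 'b) monoid_scheme \<Rightarrow> ('c, 'd) monoid_scheme \<Rightarrow> 'c \<Rightarrow> ('a \<Rightarrow> 'c) \<Rightarrow> ('a \<Rightarrow> 'c)" where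
  "conj_act \<Gamma> G h \<phi> = (\<lambda>\<gamma>\<in>carrier \<Gamma>. h \<otimes>\<^bsub>G\<^esub> \<phi> \<gamma> \<otimes>\<^bsub>G\<^esub> inv\<^bsub>G\<^esub> h)"

definition twist :: "('a, 'b) monoid_scheme \<Rightarrow> ('a \<Rightarrow> 'a) \<Rightarrow> ('a \<Rightarrow> 'c) \<Rightarrow> ('a \<Rightarrow> 'c)" where
  "twist \<Gamma> \<sigma> \<phi> = (\<lambda>\<gamma>\<in>carrier \<Gamma>. \<phi> (inv_into (carrier \<Gamma>) \<sigma> \<gamma>))"

definition Hom_sigma :: "('a, 'b) monoid_scheme \<Rightarrow> ('a \<Rightarrow> 'a) \<Rightarrow> ('c, 'd) monoid_scheme \<Rightarrow> ('a \<Rightarrow> 'c) set" where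
  "Hom_sigma \<Gamma> \<sigma> G = {\<phi> \<in> Hom \<Gamma> G. \<exists>h\<in>carrier G. conj_act \<Gamma> G h \<phi> = twist \<Gamma> \<sigma> \<phi>}"

definition Hom_sigma_orbits :: "('a, 'b) monoid_scheme \<Rightarrow> ('a \<Rightarrow> 'a) \<Rightarrow> ('c, 'd) monoid_scheme \<Rightarrow> ('a \<Rightarrow> 'c) set set" where
  "Hom_sigma_orbits \<Gamma> \<sigma> G = (\<lambda>\<phi>. (\<lambda>h. conj_act \<Gamma> G h \<phi>) ` carrier G) ` Hom_sigma \<Gamma> \<sigma> G"

end

theory Submission
  imports Defs
begin

text \<open>
  Let \<open>H = \<Gamma> \<rtimes>\<^sub>\<sigma> \<int>\<close> and let \<open>G\<close> be finite. A homomorphism \<open>\<psi> : H \<rightarrow> G\<close> is determined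
  by its restriction \<open>\<phi>\<close> to \<open>\<Gamma> = \<Gamma> \<times> {0}\<close> and by the image \<open>g\<close> of the generator
  \<open>(1, 1)\<close>, and the defining relation \<open>(1,1)(\<delta>,0) = (\<sigma> \<delta>,0)(1,1)\<close> says exactly that \<open>g\<close>
  intertwines \<open>\<phi>\<close> and \<open>\<phi> \<circ> \<sigma>\<close>: \<open>g \<phi>(\<delta>) = \<phi>(\<sigma> \<delta>) g\<close>. Conversely every such pair
  defines a homomorphism \<open>(\<gamma>, m) \<mapsto> \<phi>(\<gamma>) g\<^sup>m\<close>. Hence \<open>Hom(H, G)\<close> is in bijection with the
  pairs \<open>(\<phi>, g)\<close> with \<open>g\<close> an intertwiner of \<open>\<phi>\<close>.

  An intertwiner of \<open>\<phi>\<close> exists iff \<open>\<phi>\<^sup>\<sigma>\<close> is conjugate to \<open>\<phi>\<close>, i.e. iff \<open>\<phi> \<in> Hom\<^sub>\<sigma>(\<Gamma>, G)\<close>;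
  and the intertwiners of \<open>\<phi>\<close> are (up to inversion) the elements conjugating \<open>\<phi>\<close> to
  \<open>\<phi>\<^sup>\<sigma>\<close>, a coset of the stabilizer of \<open>\<phi>\<close> under conjugation. Summing stabilizer orders
  over an orbit gives \<open>|G|\<close>, so \<open>#Hom(H, G) = |G| \<cdot> #(Hom\<^sub>\<sigma>(\<Gamma>, G)/G)\<close>. Finiteness comes
  from \<open>H\<close> being finitely generated.
\<close>

lemma (in group) inv_cancel_left:
  "x \<in> carrier G \<Longrightarrow> z \<in> carrier G \<Longrightarrow> inv x \<otimes> (x \<otimes> z) = z"
  by (simp add: m_assoc[symmetric])

lemma (in group) conj_eq_iff:
  assumes "g \<in> carrier G" "a \<in> carrier G" "b \<in> carrier G"
  shows "inv g \<otimes> a \<otimes> g = b \<longleftrightarrow> a \<otimes> g = g \<otimes> b"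
  using assms by (metis inv_closed inv_inv m_assoc m_closed inv_solve_left)

lemma restrict_eq_iff: "restrict f A = restrict g A \<longleftrightarrow> (\<forall>x\<in>A. f x = g x)"
  by (metis restrict_apply' restrict_ext)

lemma int_induct_shift [case_names zero shift]:
  assumes "P 0" and "\<And>i::int. P i \<longleftrightarrow> P (i + 1)"
  shows "P m"
proof (induction m rule: int_induct[where k = 0])
  case (step2 i)
  then show ?case using assms(2)[of "i - 1"] by simp
qed (use assms in auto)

lemma funpow_hom: "f \<in> hom G G \<Longrightarrow> f ^^ k \<in> hom G G"
  by (induction k) (auto simp: iso_imp_homomorphism[OF id_iso] intro: hom_compose)

lemma group_action_restrict:
  fixes G (structure)
  assumes "group G"
    and closed: "\<And>g x. g \<in> carrier G \<Longrightarrow> x \<in> E \<Longrightarrow> f g x \<in> E"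
    and compose: "\<And>g h x. g \<in> carrier G \<Longrightarrow> h \<in> carrier G \<Longrightarrow> x \<in> E \<Longrightarrow>
                    f (g \<otimes> h) x = f g (f h x)"
    and unit: "\<And>x. x \<in> E \<Longrightarrow> f \<one> x = x"
  shows "group_action G E (\<lambda>g. \<lambda>x\<in>E. f g x)"
proof -
  interpret group G by fact
  have bij: "(\<lambda>x\<in>E. f g x) \<in> Bij E" if g: "g \<in> carrier G" for g
  proof -
    have "bij_betw (\<lambda>x\<in>E. f g x) E E"
    proof (rule bij_betw_byWitness[where f' = "f (inv g)"])
      show "\<forall>x\<in>E. f (inv g) ((\<lambda>x\<in>E. f g x) x) = x"
        using compose[of "inv g" g] unit g by simp
      show "\<forall>x\<in>E. (\<lambda>x\<in>E. f g x) (f (inv g) x) = x"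
        using compose[of g "inv g"] unit closed g by simp
    qed (use closed g in auto)
    then show ?thesis by (simp add: Bij_def)
  qed
  have "(\<lambda>g. \<lambda>x\<in>E. f g x) \<in> hom G (BijGroup E)"
  proof (rule homI)
    show "(\<lambda>x\<in>E. f g x) \<in> carrier (BijGroup E)" if "g \<in> carrier G" for g
      using bij that by (simp add: BijGroup_def)
    show "(\<lambda>x\<in>E. f (g \<otimes> h) x) = (\<lambda>x\<in>E. f g x) \<otimes>\<^bsub>BijGroup E\<^esub> (\<lambda>x\<in>E. f h x)"
      if "g \<in> carrier G" "h \<in> carrier G" for g h
      using that bij compose closed by (auto simp: BijGroup_def compose_def)
  qed
  then show ?thesis
    by (simp add: group_action_def group_hom_def group_hom_axioms_def group_BijGroup is_group)
qed

text \<open>The transporter \<open>{g. g \<cdot> x = h \<cdot> x}\<close> is the coset \<open>h \<cdot> Stab(x)\<close>, so it has the size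
  of the stabilizer.\<close>
lemma (in group_action) card_transporter:
  assumes x: "x \<in> E" and h: "h \<in> carrier G"
  shows "card {g \<in> carrier G. \<phi> g x = \<phi> h x} = card (stabilizer G \<phi> x)"
proof (rule bij_betw_same_card[of "\<lambda>g. inv h \<otimes> g"])
  interpret group G using group_hom group_hom.axioms(1) by auto
  have cancel: "\<phi> (inv h) (\<phi> h x) = x"
    using orbit_sym_aux h x by blast
  show "bij_betw (\<lambda>g. inv h \<otimes> g) {g \<in> carrier G. \<phi> g x = \<phi> h x} (stabilizer G \<phi> x)"
  proof (rule bij_betw_byWitness[where f' = "\<lambda>s. h \<otimes> s"])
    show "(\<lambda>g. inv h \<otimes> g) ` {g \<in> carrier G. \<phi> g x = \<phi> h x} \<subseteq> stabilizer G \<phi> x"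
      using h x cancel by (auto simp: stabilizer_def composition_rule)
    show "(\<lambda>s. h \<otimes> s) ` stabilizer G \<phi> x \<subseteq> {g \<in> carrier G. \<phi> g x = \<phi> h x}"
      using h x by (auto simp: stabilizer_def composition_rule)
  qed (use h in \<open>auto simp: stabilizer_def m_assoc[symmetric]\<close>)
qed

text \<open>Orbit--stabilizer, summed over all orbits: each orbit contributes \<open>|G|\<close>.\<close>
lemma (in group_action) sum_card_stabilizers:
  assumes "finite (carrier G)" "finite E"
  shows "(\<Sum>x\<in>E. card (stabilizer G \<phi> x)) = card (orbits G E \<phi>) * order G"
proof -
  have "(\<Sum>x\<in>E. card (stabilizer G \<phi> x))
        = (\<Sum>orb\<in>orbits G E \<phi>. \<Sum>x\<in>orb. card (stabilizer G \<phi> x))"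
    by (rule disjoint_sum[OF assms(2), symmetric])
  also have "\<dots> = (\<Sum>orb\<in>orbits G E \<phi>. order G)"
    using card_stablizer_sum[OF assms(1)] by simp
  finally show ?thesis by simp
qed

lemma hom_eq_on_generate:
  assumes "group H" "group G" "f \<in> hom H G" "g \<in> hom H G" "S \<subseteq> carrier H"
    and agree: "\<And>s. s \<in> S \<Longrightarrow> f s = g s" and x: "x \<in> generate H S"
  shows "f x = g x"
  using x
proof (induction rule: generate.induct)
  case one
  then show ?case
    using assms(1-4) by (simp add: group_hom.hom_one group_hom_axioms_def group_hom_def)
next
  case (incl s)
  then show ?case by (rule agree)
next
  case (inv s)
  then have "s \<in> carrier H" using assms(5) by blast
  then show ?case
    using assms(1-4) agree[OF inv] by (simp add: group_hom.hom_inv group_hom_axioms_def group_hom_def)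
next
  case (eng a b)
  then have "a \<in> carrier H" "b \<in> carrier H"
    using group.generate_in_carrier[OF assms(1,5)] by auto
  then show ?case using eng.IH assms(3,4) by (simp add: hom_mult)
qed

lemma finite_Hom:
  assumes "group H" "group G" "finite (carrier G)" "finitely_generated H"
  shows "finite (Hom H G)"
proof -
  obtain S where S: "finite S" "S \<subseteq> carrier H" "generate H S = carrier H"
    using assms(4) unfolding finitely_generated_def by blast
  have "inj_on (\<lambda>f. restrict f S) (Hom H G)"
  proof (rule inj_onI)
    fix f g assume f: "f \<in> Hom H G" and g: "g \<in> Hom H G"
      and eq: "restrict f S = restrict g S"
    have "f x = g x" if "x \<in> carrier H" for x
      using hom_eq_on_generate[OF assms(1,2) _ _ S(2), of f g x] f g eq that S(3)
      by (metis Hom_def IntD1 restrict_apply')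
    then show "f = g" using f g unfolding Hom_def by (auto intro: extensionalityI)
  qed
  moreover have "(\<lambda>f. restrict f S) ` Hom H G \<subseteq> PiE S (\<lambda>_. carrier G)"
    using S(2) by (auto simp: Hom_def hom_def)
  moreover have "finite (PiE S (\<lambda>_. carrier G))"
    using S(1) assms(3) by (simp add: finite_PiE)
  ultimately show ?thesis by (meson finite_imageD finite_subset)
qed

lemma conj_act_Hom:
  assumes "monoid \<Gamma>" "group G" "\<phi> \<in> Hom \<Gamma> G" "h \<in> carrier G"
  shows "conj_act \<Gamma> G h \<phi> \<in> Hom \<Gamma> G"
proof -
  interpret group G by fact
  have "conj_act \<Gamma> G h \<phi> \<in> hom \<Gamma> G"
    using assms(3,4) monoid.m_closed[OF assms(1)]
    by (auto simp: Hom_def conj_act_def hom_def Pi_iff m_assoc inv_cancel_left)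
  then show ?thesis by (simp add: Hom_def conj_act_def)
qed

lemma conj_act_mult:
  assumes "group G" "\<phi> \<in> Hom \<Gamma> G" "h \<in> carrier G" "k \<in> carrier G"
  shows "conj_act \<Gamma> G (h \<otimes>\<^bsub>G\<^esub> k) \<phi> = conj_act \<Gamma> G h (conj_act \<Gamma> G k \<phi>)"
proof -
  interpret group G by fact
  show ?thesis
    using assms(2-4) unfolding conj_act_def
    by (intro restrict_ext) (auto simp: inv_mult_group m_assoc Hom_def hom_in_carrier)
qed

lemma conj_act_one:
  assumes "group G" "\<phi> \<in> Hom \<Gamma> G"
  shows "conj_act \<Gamma> G \<one>\<^bsub>G\<^esub> \<phi> = \<phi>"
proof -
  interpret group G by fact
  show ?thesis
    using assms(2) unfolding conj_act_def
    by (intro extensionalityI[of _ "carrier \<Gamma>"]) (auto simp: Hom_def hom_in_carrier)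
qed

locale group_automorphism = group \<Gamma> for \<Gamma> (structure) +
  fixes \<sigma>
  assumes aut: "\<sigma> \<in> iso \<Gamma> \<Gamma>"
begin

abbreviation \<tau> where "\<tau> \<equiv> inv_into (carrier \<Gamma>) \<sigma>"

lemma aut_inv: "\<tau> \<in> iso \<Gamma> \<Gamma>"
  using iso_set_sym[OF aut] .

lemma aut_closed [simp]: "x \<in> carrier \<Gamma> \<Longrightarrow> \<sigma> x \<in> carrier \<Gamma>"
  and aut_inv_closed [simp]: "x \<in> carrier \<Gamma> \<Longrightarrow> \<tau> x \<in> carrier \<Gamma>"
  using aut aut_inv by (auto simp: iso_def hom_def)

lemma aut_inv_right [simp]: "x \<in> carrier \<Gamma> \<Longrightarrow> \<sigma> (\<tau> x) = x"
  and aut_inv_left [simp]: "x \<in> carrier \<Gamma> \<Longrightarrow> \<tau> (\<sigma> x) = x"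
  using aut by (auto simp: iso_def bij_betw_def intro: f_inv_into_f inv_into_f_f)

abbreviation zpow where "zpow \<equiv> aut_zpow \<Gamma> \<sigma>"

lemma zpow_hom: "zpow m \<in> hom \<Gamma> \<Gamma>"
  using funpow_hom[OF iso_imp_homomorphism[OF aut]] funpow_hom[OF iso_imp_homomorphism[OF aut_inv]]
  by (simp add: aut_zpow_def)

lemma zpow_closed [simp]: "x \<in> carrier \<Gamma> \<Longrightarrow> zpow m x \<in> carrier \<Gamma>"
  using zpow_hom by (rule hom_in_carrier)

lemma zpow_mult [simp]:
  "x \<in> carrier \<Gamma> \<Longrightarrow> y \<in> carrier \<Gamma> \<Longrightarrow> zpow m (x \<otimes> y) = zpow m x \<otimes> zpow m y"
  using zpow_hom by (rule hom_mult)

lemma zpow_one [simp]: "zpow m \<one> = \<one>"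
  using zpow_hom is_group by (simp add: group_hom_def group_hom_axioms_def group_hom.hom_one)

lemma zpow_zero [simp]: "zpow 0 x = x"
  by (simp add: aut_zpow_def)

lemma zpow_succ: "x \<in> carrier \<Gamma> \<Longrightarrow> zpow (m + 1) x = \<sigma> (zpow m x)"
proof (cases "0 \<le> m")
  case True
  then have "nat (m + 1) = Suc (nat m)" by simp
  then show ?thesis using True by (simp add: aut_zpow_def)
next
  case False
  assume x: "x \<in> carrier \<Gamma>"
  show ?thesis
  proof (cases "m = -1")
    case True
    then show ?thesis using x by (simp add: aut_zpow_def)
  next
    case False
    with \<open>\<not> 0 \<le> m\<close> have "nat (- m) = Suc (nat (- (m + 1)))" "\<not> 0 \<le> m + 1" by auto
    then show ?thesis
      using x \<open>\<not> 0 \<le> m\<close> zpow_closed[of x "m + 1"] by (simp add: aut_zpow_def)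
  qed
qed

lemma zpow_pred: "x \<in> carrier \<Gamma> \<Longrightarrow> zpow (m - 1) x = \<tau> (zpow m x)"
  using zpow_succ[of x "m - 1"] by simp

lemma zpow_add: "x \<in> carrier \<Gamma> \<Longrightarrow> zpow m (zpow n x) = zpow (m + n) x"
proof (induction m rule: int_induct[where k = 0])
  case base
  then show ?case by simp
next
  case (step1 i)
  then show ?case using zpow_succ[of "zpow n x" i] zpow_succ[of x "i + n"] by (simp add: algebra_simps)
next
  case (step2 i)
  then show ?case using zpow_pred[of "zpow n x" i] zpow_pred[of x "i + n"] by (simp add: algebra_simps)
qed

abbreviation H where "H \<equiv> semidirect_Z \<Gamma> \<sigma>"

lemma semidirect_carrier [simp]: "carrier H = carrier \<Gamma> \<times> UNIV"
  and semidirect_mult [simp]: "(g, m) \<otimes>\<^bsub>H\<^esub> (h, n) = (g \<otimes> zpow m h, m + n)"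
  and semidirect_one [simp]: "\<one>\<^bsub>H\<^esub> = (\<one>, 0)"
  by (simp_all add: semidirect_Z_def)

lemma semidirect_group: "group H"
proof (rule groupI)
  fix x y assume "x \<in> carrier H" "y \<in> carrier H"
  then show "x \<otimes>\<^bsub>H\<^esub> y \<in> carrier H" by (cases x; cases y) auto
next
  fix x y z assume "x \<in> carrier H" "y \<in> carrier H" "z \<in> carrier H"
  then show "x \<otimes>\<^bsub>H\<^esub> y \<otimes>\<^bsub>H\<^esub> z = x \<otimes>\<^bsub>H\<^esub> (y \<otimes>\<^bsub>H\<^esub> z)"
    by (cases x; cases y; cases z) (auto simp: m_assoc zpow_add add.assoc)
next
  fix x assume "x \<in> carrier H"
  then show "\<one>\<^bsub>H\<^esub> \<otimes>\<^bsub>H\<^esub> x = x" by (cases x) auto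
next
  fix x assume "x \<in> carrier H"
  then obtain g m where x: "x = (g, m)" "g \<in> carrier \<Gamma>" by (cases x) auto
  then have "(zpow (- m) (inv g), - m) \<otimes>\<^bsub>H\<^esub> x = \<one>\<^bsub>H\<^esub>"
    using zpow_mult[of "inv g" g "- m"] by (simp add: zpow_add)
  then show "\<exists>y\<in>carrier H. y \<otimes>\<^bsub>H\<^esub> x = \<one>\<^bsub>H\<^esub>" using x by force
qed simp

end

locale twisted_homs = group_automorphism \<Gamma> \<sigma> + G: group G
  for \<Gamma> (structure) and \<sigma> and G :: "('c, 'd) monoid_scheme"
begin

definition intertwiners where
  "intertwiners \<phi> = {g \<in> carrier G. \<forall>\<delta>\<in>carrier \<Gamma>. g \<otimes>\<^bsub>G\<^esub> \<phi> \<delta> = \<phi> (\<sigma> \<delta>) \<otimes>\<^bsub>G\<^esub> g}"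

text \<open>The intertwining relation propagates to all integer powers of \<open>\<sigma>\<close> and \<open>g\<close>; this is
  what makes \<open>(\<gamma>, m) \<mapsto> \<phi>(\<gamma>) g\<^sup>m\<close> multiplicative.\<close>
lemma intertwiner_zpow:
  assumes \<phi>: "\<phi> \<in> hom \<Gamma> G" and g: "g \<in> intertwiners \<phi>" and \<delta>: "\<delta> \<in> carrier \<Gamma>"
  shows "\<phi> (zpow m \<delta>) \<otimes>\<^bsub>G\<^esub> g [^]\<^bsub>G\<^esub> m = g [^]\<^bsub>G\<^esub> m \<otimes>\<^bsub>G\<^esub> \<phi> \<delta>"
proof (induction m rule: int_induct_shift)
  case zero
  then show ?case using \<phi> \<delta> by (simp add: hom_in_carrier)
next
  case (shift i)
  have gG: "g \<in> carrier G"
    using g by (simp add: intertwiners_def)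
  have swap: "\<phi> (\<sigma> x) \<otimes>\<^bsub>G\<^esub> g = g \<otimes>\<^bsub>G\<^esub> \<phi> x" if "x \<in> carrier \<Gamma>" for x
    using g that by (simp add: intertwiners_def)
  have pow: "g [^]\<^bsub>G\<^esub> (i + 1) = g \<otimes>\<^bsub>G\<^esub> g [^]\<^bsub>G\<^esub> i"
    using G.int_pow_mult[OF gG, of 1 i] gG by (simp add: add.commute)
  have "\<phi> (zpow (i + 1) \<delta>) \<otimes>\<^bsub>G\<^esub> g [^]\<^bsub>G\<^esub> (i + 1)
        = (\<phi> (\<sigma> (zpow i \<delta>)) \<otimes>\<^bsub>G\<^esub> g) \<otimes>\<^bsub>G\<^esub> g [^]\<^bsub>G\<^esub> i"
    using \<phi> \<delta> gG by (simp add: pow zpow_succ G.m_assoc hom_in_carrier)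
  also have "\<dots> = g \<otimes>\<^bsub>G\<^esub> (\<phi> (zpow i \<delta>) \<otimes>\<^bsub>G\<^esub> g [^]\<^bsub>G\<^esub> i)"
    using \<phi> \<delta> gG by (simp add: swap G.m_assoc hom_in_carrier)
  finally have lhs: "\<phi> (zpow (i + 1) \<delta>) \<otimes>\<^bsub>G\<^esub> g [^]\<^bsub>G\<^esub> (i + 1)
                    = g \<otimes>\<^bsub>G\<^esub> (\<phi> (zpow i \<delta>) \<otimes>\<^bsub>G\<^esub> g [^]\<^bsub>G\<^esub> i)" .
  have rhs: "g [^]\<^bsub>G\<^esub> (i + 1) \<otimes>\<^bsub>G\<^esub> \<phi> \<delta> = g \<otimes>\<^bsub>G\<^esub> (g [^]\<^bsub>G\<^esub> i \<otimes>\<^bsub>G\<^esub> \<phi> \<delta>)"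
    using \<phi> \<delta> gG by (simp add: pow G.m_assoc hom_in_carrier)
  show ?case
    unfolding lhs rhs using \<phi> \<delta> gG by (simp add: G.l_cancel hom_in_carrier)
qed

lemma group_hom_semidirect: "\<psi> \<in> hom H G \<Longrightarrow> group_hom H G \<psi>"
  using semidirect_group G.is_group by (simp add: group_hom_def group_hom_axioms_def)

lemma hom_semidirect_decompose:
  assumes \<psi>: "\<psi> \<in> hom H G" and \<gamma>: "\<gamma> \<in> carrier \<Gamma>"
  shows "\<psi> (\<gamma>, m) = \<psi> (\<gamma>, 0) \<otimes>\<^bsub>G\<^esub> \<psi> (\<one>, 1) [^]\<^bsub>G\<^esub> m"
proof -
  interpret \<psi>: group_hom H G \<psi> using group_hom_semidirect[OF \<psi>] .
  let ?t = "\<psi> (\<one>, 1)"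
  have t: "?t \<in> carrier G" by (intro \<psi>.hom_closed) simp
  have powers: "\<psi> (\<one>, n) = ?t [^]\<^bsub>G\<^esub> n" for n
  proof (induction n rule: int_induct_shift)
    case zero
    then show ?case using \<psi>.hom_one by simp
  next
    case (shift i)
    have "\<psi> (\<one>, i + 1) = \<psi> (\<one>, i) \<otimes>\<^bsub>G\<^esub> ?t"
      using \<psi>.hom_mult[of "(\<one>, i)" "(\<one>, 1)"] by simp
    moreover have "?t [^]\<^bsub>G\<^esub> (i + 1) = ?t [^]\<^bsub>G\<^esub> i \<otimes>\<^bsub>G\<^esub> ?t"
      using G.int_pow_mult[OF t, of i 1] t by simp
    moreover have "\<psi> (\<one>, i) \<in> carrier G" by (intro \<psi>.hom_closed) simp
    ultimately show ?case using t G.right_cancel[of ?t "\<psi> (\<one>, i)" "?t [^]\<^bsub>G\<^esub> i"] by simp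
  qed
  have "\<psi> (\<gamma>, m) = \<psi> ((\<gamma>, 0) \<otimes>\<^bsub>H\<^esub> (\<one>, m))" using \<gamma> by simp
  also have "\<dots> = \<psi> (\<gamma>, 0) \<otimes>\<^bsub>G\<^esub> \<psi> (\<one>, m)" using \<gamma> by (intro \<psi>.hom_mult) auto
  finally show ?thesis unfolding powers[of m] .
qed

definition hom_to_pair where
  "hom_to_pair \<psi> = ((\<lambda>\<gamma>\<in>carrier \<Gamma>. \<psi> (\<gamma>, 0::int)), \<psi> (\<one>, 1::int))"

definition pair_to_hom where
  "pair_to_hom p = restrict (\<lambda>(\<gamma>, m). fst p \<gamma> \<otimes>\<^bsub>G\<^esub> snd p [^]\<^bsub>G\<^esub> m)
                            (carrier \<Gamma> \<times> (UNIV :: int set))"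

lemma hom_to_pair_mem:
  assumes \<psi>: "\<psi> \<in> Hom H G"
  shows "hom_to_pair \<psi> \<in> Sigma (Hom \<Gamma> G) intertwiners"
proof -
  interpret \<psi>: group_hom H G \<psi> using group_hom_semidirect assms by (simp add: Hom_def)
  let ?\<phi> = "\<lambda>\<gamma>\<in>carrier \<Gamma>. \<psi> (\<gamma>, 0::int)" and ?t = "\<psi> (\<one>, 1::int)"
  have "?\<phi> \<in> hom \<Gamma> G"
  proof (rule homI)
    show "?\<phi> x \<in> carrier G" if "x \<in> carrier \<Gamma>" for x
      using that by (simp add: \<psi>.hom_closed)
    show "?\<phi> (x \<otimes> y) = ?\<phi> x \<otimes>\<^bsub>G\<^esub> ?\<phi> y" if "x \<in> carrier \<Gamma>" "y \<in> carrier \<Gamma>" for x y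
      using that \<psi>.hom_mult[of "(x, 0)" "(y, 0)"] by simp
  qed
  moreover have "?t \<in> intertwiners ?\<phi>"
    unfolding intertwiners_def
  proof (intro CollectI conjI ballI)
    show "?t \<in> carrier G" by (simp add: \<psi>.hom_closed)
    fix \<delta> assume \<delta>: "\<delta> \<in> carrier \<Gamma>"
    text \<open>Both sides are the image of the same element of the semidirect product.\<close>
    have "(\<one>, 1) \<otimes>\<^bsub>H\<^esub> (\<delta>, 0) = (\<sigma> \<delta>, 0) \<otimes>\<^bsub>H\<^esub> (\<one>, 1)"
      using \<delta> zpow_succ[of \<delta> 0] by simp
    then show "?t \<otimes>\<^bsub>G\<^esub> ?\<phi> \<delta> = ?\<phi> (\<sigma> \<delta>) \<otimes>\<^bsub>G\<^esub> ?t"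
      using \<delta> \<psi>.hom_mult[of "(\<one>, 1)" "(\<delta>, 0)"] \<psi>.hom_mult[of "(\<sigma> \<delta>, 0)" "(\<one>, 1)"] by simp
  qed
  ultimately show ?thesis by (simp add: hom_to_pair_def Hom_def)
qed

lemma pair_to_hom_mem:
  assumes p: "p \<in> Sigma (Hom \<Gamma> G) intertwiners"
  shows "pair_to_hom p \<in> Hom H G"
proof -
  obtain \<phi> g where p: "p = (\<phi>, g)" and \<phi>: "\<phi> \<in> hom \<Gamma> G" and g: "g \<in> intertwiners \<phi>"
    using assms by (auto simp: Hom_def)
  have gG: "g \<in> carrier G" using g by (simp add: intertwiners_def)
  have "pair_to_hom p \<in> hom H G"
  proof (rule homI)
    show "pair_to_hom p x \<in> carrier G" if "x \<in> carrier H" for x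
      using that p \<phi> gG by (auto simp: pair_to_hom_def hom_in_carrier)
  next
    fix x y assume "x \<in> carrier H" "y \<in> carrier H"
    then obtain a m b n where x: "x = (a, m)" "a \<in> carrier \<Gamma>" and y: "y = (b, n)" "b \<in> carrier \<Gamma>"
      by auto
    have "pair_to_hom p (x \<otimes>\<^bsub>H\<^esub> y)
          = \<phi> a \<otimes>\<^bsub>G\<^esub> (\<phi> (zpow m b) \<otimes>\<^bsub>G\<^esub> g [^]\<^bsub>G\<^esub> m) \<otimes>\<^bsub>G\<^esub> g [^]\<^bsub>G\<^esub> n"
      using x y p \<phi> gG by (simp add: pair_to_hom_def hom_mult G.int_pow_mult G.m_assoc hom_in_carrier)
    also have "\<dots> = \<phi> a \<otimes>\<^bsub>G\<^esub> (g [^]\<^bsub>G\<^esub> m \<otimes>\<^bsub>G\<^esub> \<phi> b) \<otimes>\<^bsub>G\<^esub> g [^]\<^bsub>G\<^esub> n"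
      using intertwiner_zpow[OF \<phi> g y(2)] by simp
    also have "\<dots> = pair_to_hom p x \<otimes>\<^bsub>G\<^esub> pair_to_hom p y"
      using x y p \<phi> gG by (simp add: pair_to_hom_def G.m_assoc hom_in_carrier)
    finally show "pair_to_hom p (x \<otimes>\<^bsub>H\<^esub> y) = pair_to_hom p x \<otimes>\<^bsub>G\<^esub> pair_to_hom p y" .
  qed
  then show ?thesis by (simp add: Hom_def pair_to_hom_def)
qed

lemma hom_to_pair_inverse:
  assumes "p \<in> Sigma (Hom \<Gamma> G) intertwiners"
  shows "hom_to_pair (pair_to_hom p) = p"
proof -
  obtain \<phi> g where p: "p = (\<phi>, g)" "\<phi> \<in> hom \<Gamma> G" "\<phi> \<in> extensional (carrier \<Gamma>)"
    and gG: "g \<in> carrier G"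
    using assms by (auto simp: Hom_def intertwiners_def)
  have "(\<lambda>\<gamma>\<in>carrier \<Gamma>. pair_to_hom p (\<gamma>, 0::int)) = \<phi>"
    using p by (auto simp: pair_to_hom_def hom_in_carrier intro!: extensionalityI[OF _ p(3)])
  moreover have "\<phi> \<one> = \<one>\<^bsub>G\<^esub>"
    using p(2) is_group G.is_group by (simp add: group_hom.hom_one group_hom_def group_hom_axioms_def)
  then have "pair_to_hom p (\<one>, 1) = g"
    using p gG by (simp add: pair_to_hom_def)
  ultimately show ?thesis using p by (simp add: hom_to_pair_def)
qed

lemma pair_to_hom_inverse:
  assumes \<psi>: "\<psi> \<in> Hom H G"
  shows "pair_to_hom (hom_to_pair \<psi>) = \<psi>"
proof (rule extensionalityI[of _ "carrier H"])
  show "pair_to_hom (hom_to_pair \<psi>) \<in> extensional (carrier H)"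
    by (simp add: pair_to_hom_def)
  show "\<psi> \<in> extensional (carrier H)" using \<psi> by (simp add: Hom_def)
  fix x assume "x \<in> carrier H"
  then obtain a m where "x = (a, m)" "a \<in> carrier \<Gamma>" by auto
  then show "pair_to_hom (hom_to_pair \<psi>) x = \<psi> x"
    using hom_semidirect_decompose[of \<psi> a m] \<psi>
    by (simp add: pair_to_hom_def hom_to_pair_def Hom_def)
qed

lemma bij_hom_to_pair: "bij_betw hom_to_pair (Hom H G) (Sigma (Hom \<Gamma> G) intertwiners)"
  by (rule bij_betw_byWitness[of _ pair_to_hom])
     (simp_all add: image_subset_iff hom_to_pair_mem pair_to_hom_mem
                    hom_to_pair_inverse pair_to_hom_inverse)

lemma intertwiner_iff_conj:
  assumes \<phi>: "\<phi> \<in> hom \<Gamma> G" and g: "g \<in> carrier G"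
  shows "g \<in> intertwiners \<phi> \<longleftrightarrow> conj_act \<Gamma> G (inv\<^bsub>G\<^esub> g) \<phi> = twist \<Gamma> \<sigma> \<phi>"
proof -
  have "conj_act \<Gamma> G (inv\<^bsub>G\<^esub> g) \<phi> = twist \<Gamma> \<sigma> \<phi>
        \<longleftrightarrow> (\<forall>\<gamma>\<in>carrier \<Gamma>. inv\<^bsub>G\<^esub> g \<otimes>\<^bsub>G\<^esub> \<phi> \<gamma> \<otimes>\<^bsub>G\<^esub> g = \<phi> (\<tau> \<gamma>))"
    using g by (simp add: conj_act_def twist_def restrict_eq_iff)
  also have "\<dots> \<longleftrightarrow> (\<forall>\<delta>\<in>carrier \<Gamma>. inv\<^bsub>G\<^esub> g \<otimes>\<^bsub>G\<^esub> \<phi> (\<sigma> \<delta>) \<otimes>\<^bsub>G\<^esub> g = \<phi> \<delta>)"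
    by (metis aut_closed aut_inv_closed aut_inv_left aut_inv_right)
  also have "\<dots> \<longleftrightarrow> (\<forall>\<delta>\<in>carrier \<Gamma>. g \<otimes>\<^bsub>G\<^esub> \<phi> \<delta> = \<phi> (\<sigma> \<delta>) \<otimes>\<^bsub>G\<^esub> g)"
    using \<phi> g by (auto simp: G.conj_eq_iff hom_in_carrier)
  finally show ?thesis using g by (simp add: intertwiners_def)
qed

lemma Hom_sigma_eq: "Hom_sigma \<Gamma> \<sigma> G = {\<phi> \<in> Hom \<Gamma> G. intertwiners \<phi> \<noteq> {}}"
proof -
  have "(\<exists>h\<in>carrier G. conj_act \<Gamma> G h \<phi> = twist \<Gamma> \<sigma> \<phi>) \<longleftrightarrow> intertwiners \<phi> \<noteq> {}"
    if \<phi>: "\<phi> \<in> hom \<Gamma> G" for \<phi>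
  proof -
    text \<open>Inversion permutes \<open>G\<close>, so we may look for the conjugating element as \<open>g\<^sup>-\<^sup>1\<close>.\<close>
    have "(\<exists>h\<in>carrier G. conj_act \<Gamma> G h \<phi> = twist \<Gamma> \<sigma> \<phi>)
          \<longleftrightarrow> (\<exists>g\<in>carrier G. conj_act \<Gamma> G (inv\<^bsub>G\<^esub> g) \<phi> = twist \<Gamma> \<sigma> \<phi>)"
      by (metis G.inv_closed G.inv_inv)
    also have "\<dots> \<longleftrightarrow> intertwiners \<phi> \<noteq> {}"
      using intertwiner_iff_conj[OF \<phi>] by (auto simp: intertwiners_def)
    finally show ?thesis .
  qed
  then show ?thesis by (auto simp: Hom_sigma_def Hom_def)
qed

lemma conj_act_intertwiner:
  assumes \<phi>: "\<phi> \<in> hom \<Gamma> G" and g: "g \<in> intertwiners \<phi>" and h: "h \<in> carrier G"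
  shows "h \<otimes>\<^bsub>G\<^esub> g \<otimes>\<^bsub>G\<^esub> inv\<^bsub>G\<^esub> h \<in> intertwiners (conj_act \<Gamma> G h \<phi>)"
  unfolding intertwiners_def
proof (intro CollectI conjI ballI)
  have gG: "g \<in> carrier G" using g by (simp add: intertwiners_def)
  then show "h \<otimes>\<^bsub>G\<^esub> g \<otimes>\<^bsub>G\<^esub> inv\<^bsub>G\<^esub> h \<in> carrier G" using h by simp
  fix \<delta> assume \<delta>: "\<delta> \<in> carrier \<Gamma>"
  have swap: "g \<otimes>\<^bsub>G\<^esub> \<phi> \<delta> = \<phi> (\<sigma> \<delta>) \<otimes>\<^bsub>G\<^esub> g" using g \<delta> by (simp add: intertwiners_def)
  have "h \<otimes>\<^bsub>G\<^esub> g \<otimes>\<^bsub>G\<^esub> inv\<^bsub>G\<^esub> h \<otimes>\<^bsub>G\<^esub> conj_act \<Gamma> G h \<phi> \<delta>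
        = h \<otimes>\<^bsub>G\<^esub> (g \<otimes>\<^bsub>G\<^esub> \<phi> \<delta>) \<otimes>\<^bsub>G\<^esub> inv\<^bsub>G\<^esub> h"
    using \<delta> h gG \<phi> by (simp add: conj_act_def hom_in_carrier G.m_assoc G.inv_cancel_left)
  also have "\<dots> = conj_act \<Gamma> G h \<phi> (\<sigma> \<delta>) \<otimes>\<^bsub>G\<^esub> (h \<otimes>\<^bsub>G\<^esub> g \<otimes>\<^bsub>G\<^esub> inv\<^bsub>G\<^esub> h)"
    using \<delta> h gG \<phi> by (simp add: swap conj_act_def hom_in_carrier G.m_assoc G.inv_cancel_left)
  finally show "h \<otimes>\<^bsub>G\<^esub> g \<otimes>\<^bsub>G\<^esub> inv\<^bsub>G\<^esub> h \<otimes>\<^bsub>G\<^esub> conj_act \<Gamma> G h \<phi> \<delta>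
                = conj_act \<Gamma> G h \<phi> (\<sigma> \<delta>) \<otimes>\<^bsub>G\<^esub> (h \<otimes>\<^bsub>G\<^esub> g \<otimes>\<^bsub>G\<^esub> inv\<^bsub>G\<^esub> h)" .
qed

lemma conj_act_Hom_sigma:
  assumes "\<phi> \<in> Hom_sigma \<Gamma> \<sigma> G" "h \<in> carrier G"
  shows "conj_act \<Gamma> G h \<phi> \<in> Hom_sigma \<Gamma> \<sigma> G"
proof -
  obtain g where "g \<in> intertwiners \<phi>" and \<phi>: "\<phi> \<in> Hom \<Gamma> G"
    using assms(1) by (auto simp: Hom_sigma_eq)
  then have "h \<otimes>\<^bsub>G\<^esub> g \<otimes>\<^bsub>G\<^esub> inv\<^bsub>G\<^esub> h \<in> intertwiners (conj_act \<Gamma> G h \<phi>)"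
    using conj_act_intertwiner assms(2) by (simp add: Hom_def)
  then show ?thesis
    using conj_act_Hom[OF is_monoid G.is_group \<phi> assms(2)] by (auto simp: Hom_sigma_eq)
qed

abbreviation conj_action where
  "conj_action \<equiv> (\<lambda>h. \<lambda>\<phi>\<in>Hom_sigma \<Gamma> \<sigma> G. conj_act \<Gamma> G h \<phi>)"

lemma group_action_conj: "group_action G (Hom_sigma \<Gamma> \<sigma> G) conj_action"
proof (rule group_action_restrict[OF G.is_group])
  show "conj_act \<Gamma> G h \<phi> \<in> Hom_sigma \<Gamma> \<sigma> G"
    if "h \<in> carrier G" "\<phi> \<in> Hom_sigma \<Gamma> \<sigma> G" for h \<phi>
    using that(2,1) by (rule conj_act_Hom_sigma)
next
  fix h k \<phi> assume h: "h \<in> carrier G" and k: "k \<in> carrier G" and \<phi>: "\<phi> \<in> Hom_sigma \<Gamma> \<sigma> G"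
  have "\<phi> \<in> Hom \<Gamma> G" using \<phi> by (simp add: Hom_sigma_def)
  then show "conj_act \<Gamma> G (h \<otimes>\<^bsub>G\<^esub> k) \<phi> = conj_act \<Gamma> G h (conj_act \<Gamma> G k \<phi>)"
    using h k by (rule conj_act_mult[OF G.is_group])
next
  fix \<phi> assume "\<phi> \<in> Hom_sigma \<Gamma> \<sigma> G"
  then show "conj_act \<Gamma> G \<one>\<^bsub>G\<^esub> \<phi> = \<phi>"
    by (simp add: Hom_sigma_def conj_act_one[OF G.is_group])
qed

lemma card_intertwiners:
  assumes \<phi>: "\<phi> \<in> Hom_sigma \<Gamma> \<sigma> G"
  shows "card (intertwiners \<phi>) = card (stabilizer G conj_action \<phi>)"
proof -
  interpret group_action G "Hom_sigma \<Gamma> \<sigma> G" conj_action by (rule group_action_conj)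
  obtain g0 where g0: "g0 \<in> intertwiners \<phi>" and \<phi>hom: "\<phi> \<in> hom \<Gamma> G"
    using \<phi> by (auto simp: Hom_sigma_eq Hom_def)
  have g0G: "g0 \<in> carrier G" using g0 by (simp add: intertwiners_def)
  let ?T = "{h \<in> carrier G. conj_action h \<phi> = conj_action (inv\<^bsub>G\<^esub> g0) \<phi>}"
  have T: "?T = {h \<in> carrier G. conj_act \<Gamma> G h \<phi> = twist \<Gamma> \<sigma> \<phi>}"
    using \<phi> g0 g0G intertwiner_iff_conj[OF \<phi>hom] by auto
  have inv_mem: "inv\<^bsub>G\<^esub> h \<in> intertwiners \<phi> \<longleftrightarrow> conj_act \<Gamma> G h \<phi> = twist \<Gamma> \<sigma> \<phi>"
    if "h \<in> carrier G" for h
    using intertwiner_iff_conj[OF \<phi>hom, of "inv\<^bsub>G\<^esub> h"] that by simp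
  have in_carrier: "intertwiners \<phi> \<subseteq> carrier G" by (auto simp: intertwiners_def)
  text \<open>Inversion identifies the intertwiners with the transporter from \<open>\<phi>\<close> to its twist.\<close>
  have "bij_betw (m_inv G) (intertwiners \<phi>) ?T"
    unfolding T
  proof (rule bij_betw_byWitness[where f' = "m_inv G"])
    show "m_inv G ` intertwiners \<phi> \<subseteq> {h \<in> carrier G. conj_act \<Gamma> G h \<phi> = twist \<Gamma> \<sigma> \<phi>}"
      using in_carrier intertwiner_iff_conj[OF \<phi>hom] by auto
    show "m_inv G ` {h \<in> carrier G. conj_act \<Gamma> G h \<phi> = twist \<Gamma> \<sigma> \<phi>} \<subseteq> intertwiners \<phi>"
      using inv_mem by auto
  qed (use in_carrier in auto)
  then have "card (intertwiners \<phi>) = card ?T" by (rule bij_betw_same_card)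
  also have "\<dots> = card (stabilizer G conj_action \<phi>)"
    using card_transporter[OF \<phi>] g0G by simp
  finally show ?thesis .
qed

lemma orbits_conj_action: "orbits G (Hom_sigma \<Gamma> \<sigma> G) conj_action = Hom_sigma_orbits \<Gamma> \<sigma> G"
  unfolding orbits_def orbit_def Hom_sigma_orbits_def by auto

lemma card_Hom_semidirect:
  assumes fG: "finite (carrier G)" and fH: "finite (Hom H G)"
  shows "finite (Hom_sigma \<Gamma> \<sigma> G)"
    and "card (Hom H G) = card (Hom_sigma_orbits \<Gamma> \<sigma> G) * order G"
proof -
  have pairs: "Sigma (Hom \<Gamma> G) intertwiners = Sigma (Hom_sigma \<Gamma> \<sigma> G) intertwiners"
    by (auto simp: Hom_sigma_eq)
  have "finite (Sigma (Hom_sigma \<Gamma> \<sigma> G) intertwiners)"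
    using bij_betw_finite[OF bij_hom_to_pair] fH pairs by simp
  moreover have "Hom_sigma \<Gamma> \<sigma> G = fst ` Sigma (Hom_sigma \<Gamma> \<sigma> G) intertwiners"
    by (force simp: Hom_sigma_eq)
  ultimately show fin: "finite (Hom_sigma \<Gamma> \<sigma> G)" by (metis finite_imageI)
  interpret group_action G "Hom_sigma \<Gamma> \<sigma> G" conj_action by (rule group_action_conj)
  have fin_intertwiners: "finite (intertwiners \<phi>)" for \<phi>
    using fG by (rule rev_finite_subset) (auto simp: intertwiners_def)
  have "card (Hom H G) = card (Sigma (Hom_sigma \<Gamma> \<sigma> G) intertwiners)"
    using bij_betw_same_card[OF bij_hom_to_pair] pairs by simp
  also have "\<dots> = (\<Sum>\<phi>\<in>Hom_sigma \<Gamma> \<sigma> G. card (intertwiners \<phi>))"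
    using fin fin_intertwiners by (simp add: card_SigmaI)
  also have "\<dots> = (\<Sum>\<phi>\<in>Hom_sigma \<Gamma> \<sigma> G. card (stabilizer G conj_action \<phi>))"
    by (simp add: card_intertwiners)
  also have "\<dots> = card (Hom_sigma_orbits \<Gamma> \<sigma> G) * order G"
    using sum_card_stabilizers[OF fG fin] by (simp add: orbits_conj_action)
  finally show "card (Hom H G) = card (Hom_sigma_orbits \<Gamma> \<sigma> G) * order G" .
qed

end

theorem corollary3p2:
  fixes \<Gamma> :: "('a, 'b) monoid_scheme" and G :: "('c, 'd) monoid_scheme" and \<sigma> :: "'a \<Rightarrow> 'a"
  assumes "group \<Gamma>"
    and "\<sigma> \<in> iso \<Gamma> \<Gamma>"
    and "finitely_generated (semidirect_Z \<Gamma> \<sigma>)"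
    and "group G"
    and "finite (carrier G)"
  shows "finite (Hom_sigma \<Gamma> \<sigma> G)
    \<and> real (card (Hom (semidirect_Z \<Gamma> \<sigma>) G)) / real (card (carrier G))
        = real (card (Hom_sigma_orbits \<Gamma> \<sigma> G))
    \<and> card (carrier G) dvd card (Hom (semidirect_Z \<Gamma> \<sigma>) G)"
proof -
  interpret twisted_homs \<Gamma> \<sigma> G
    using assms by (simp add: twisted_homs_def group_automorphism_def group_automorphism_axioms_def)
  have "finite (Hom (semidirect_Z \<Gamma> \<sigma>) G)"
    using finite_Hom[OF semidirect_group assms(4,5,3)] .
  note count = card_Hom_semidirect[OF assms(5) this]
  have "card (carrier G) > 0"
    using assms(5) G.one_closed by (auto simp: card_gt_0_iff)
  then show ?thesis
    using count by (simp add: order_def)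
qed

end
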